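(* Let $\mathcal{B}$ be a cat-graph and $F$ a trihomomorphism $\mathcal{B}^{\mathrm{coop}}\to\mathbf{BiCat}$ (in the sense below). Fix objects $b,c$ of $\mathcal{B}$, $x$ of $Fb$ and $y$ of $Fc$. Assume $\mathcal{B}(b,c)$ is a finite category and $k_\bullet$ is a coweighting on its similarity matrix $\zeta_{\mathcal{B}(b,c)}$, and that for each 1-morphism $f : b\to c$ the category $Fb(x,f^*y)$ is finite and $k_\bullet$ is a coweighting on its similarity matrix $\zeta_{Fb(x,f^*y)}$. Then the function $(f,u)\mapsto k_{(f,u)} := k_f\,k_u$ is a coweighting on the similarity matrix of $\mathrm{Gr}(F)((b,x),(c,y))$, i.e. for every object $(g,v)$, \[ \sum_{(f,u)} k_f k_u\,\#\mathrm{Gr}(F)((b,x),(c,y))\big((f,u),(g,v)\big) = 1. \]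
   Context: For finite sets $I,J$ and $\zeta : I\times J\to\mathbb{Q}$, a coweighting is $k_\bullet : I\to\mathbb{Q}$ with $\sum_i k_i\zeta(i,j)=1$ for all $j$. The similarity matrix of a finite category $C$ is $\zeta_C(s,t)=\#C(s,t)$ on $\mathrm{ob}(C)\times\mathrm{ob}(C)$. A cat-graph $\mathcal{B}$ is a set of objects with a small category $\mathcal{B}(b,c)$ for each pair (objects = 1-morphisms, morphisms = 2-morphisms). A trihomomorphism $F : \mathcal{B}^{\mathrm{coop}}\to\mathbf{BiCat}$ consists of a bicategory $Fb$ for each object $b$, a lax functor $f^* : Fc\to Fb$ for each 1-morphism $f : b\to c$, and a lax natural transformation $\alpha^* : g^*\Rightarrow f^*$ for each 2-morphism $\alpha : f\Rightarrow g$, with component 1-morphisms $\alpha^*_y : g^*y\to f^*y$ in $Fb$. The Grothendieck construction $\mathrm{Gr}(F)$ is the cat-graph whose objects are pairs $(b,x)$ with $x\in\mathrm{ob}(Fb)$; a 1-morphism $(b,x)\to(c,y)$ is a pair $(f,u)$ with $f : b\to c$ in $\mathcal{B}$ and $u : x\to f^*y$ in $Fb$; a 2-morphism $(f,u)\Rightarrow(g,v)$ is a pair $(\alpha,\beta)$ with $\alpha : f\Rightarrow g$ in $\mathcal{B}$ and $\beta : u\Rightarrow\alpha^*_y\circ v$ a 2-morphism in $Fb$. *)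

theory Defs
  imports Main "HOL.Rat"
begin

record ('o, 'a) category =
  Obj  :: "'o set"
  Arr  :: "'a set"
  Dom  :: "'a \<Rightarrow> 'o"
  Cod  :: "'a \<Rightarrow> 'o"
  Ide  :: "'o \<Rightarrow> 'a"
  Comp :: "'a \<Rightarrow> 'a \<Rightarrow> 'a"   \<comment> \<open>Comp g f = g \<circ> f\<close>

definition is_category :: "('o, 'a) category \<Rightarrow> bool" where
  "is_category C \<longleftrightarrow>
     (\<forall>a\<in>Arr C. Dom C a \<in> Obj C \<and> Cod C a \<in> Obj C) \<and>
     (\<forall>s\<in>Obj C. Ide C s \<in> Arr C \<and> Dom C (Ide C s) = s \<and> Cod C (Ide C s) = s) \<and>
     (\<forall>f\<in>Arr C. \<forall>g\<in>Arr C. Cod C f = Dom C g \<longrightarrow>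
        Comp C g f \<in> Arr C \<and> Dom C (Comp C g f) = Dom C f \<and> Cod C (Comp C g f) = Cod C g) \<and>
     (\<forall>f\<in>Arr C. Comp C f (Ide C (Dom C f)) = f \<and> Comp C (Ide C (Cod C f)) f = f) \<and>
     (\<forall>f\<in>Arr C. \<forall>g\<in>Arr C. \<forall>h\<in>Arr C. Cod C f = Dom C g \<and> Cod C g = Dom C h \<longrightarrow>
        Comp C h (Comp C g f) = Comp C (Comp C h g) f)"

definition hom :: "('o, 'a) category \<Rightarrow> 'o \<Rightarrow> 'o \<Rightarrow> 'a set" where
  "hom C s t = {a \<in> Arr C. Dom C a = s \<and> Cod C a = t}"

definition finite_category :: "('o, 'a) category \<Rightarrow> bool" where
  "finite_category C \<longleftrightarrow> is_category C \<and> finite (Obj C) \<and> finite (Arr C)"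

definition similarity_matrix :: "('o, 'a) category \<Rightarrow> 'o \<Rightarrow> 'o \<Rightarrow> rat" where
  "similarity_matrix C s t = of_nat (card (hom C s t))"

definition coweighting :: "'i set \<Rightarrow> 'j set \<Rightarrow> ('i \<Rightarrow> 'j \<Rightarrow> rat) \<Rightarrow> ('i \<Rightarrow> rat) \<Rightarrow> bool" where
  "coweighting I J \<zeta> k \<longleftrightarrow> (\<forall>j\<in>J. (\<Sum>i\<in>I. k i * \<zeta> i j) = 1)"

record ('b, 'f, 'a) cat_graph =
  CGOb  :: "'b set"
  CGHom :: "'b \<Rightarrow> 'b \<Rightarrow> ('f, 'a) category"

definition is_cat_graph :: "('b, 'f, 'a) cat_graph \<Rightarrow> bool" where
  "is_cat_graph B \<longleftrightarrow> (\<forall>b\<in>CGOb B. \<forall>c\<in>CGOb B. is_category (CGHom B b c))"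

record ('x, 'm, 'c) bicat_data =
  BOb    :: "'x set"
  BHom   :: "'x \<Rightarrow> 'x \<Rightarrow> ('m, 'c) category"
  HComp  :: "'m \<Rightarrow> 'm \<Rightarrow> 'm"   \<comment> \<open>HComp w v = w \<circ> v for v : x -> y, w : y -> z\<close>

definition is_bicat_data :: "('x, 'm, 'c) bicat_data \<Rightarrow> bool" where
  "is_bicat_data D \<longleftrightarrow>
     (\<forall>x\<in>BOb D. \<forall>y\<in>BOb D. is_category (BHom D x y)) \<and>
     (\<forall>x\<in>BOb D. \<forall>y\<in>BOb D. \<forall>z\<in>BOb D. \<forall>v\<in>Obj (BHom D x y). \<forall>w\<in>Obj (BHom D y z).
        HComp D w v \<in> Obj (BHom D x z))"

section \<open>Data of a trihomomorphism F : B^coop -> BiCat used by the Grothendieck construction\<close>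

record ('b, 'f, 'a, 'x, 'm, 'c) trihom_data =
  FB    :: "'b \<Rightarrow> ('x, 'm, 'c) bicat_data"
  Fstar :: "'b \<Rightarrow> 'b \<Rightarrow> 'f \<Rightarrow> 'x \<Rightarrow> 'x"
  Fcomp :: "'b \<Rightarrow> 'b \<Rightarrow> 'a \<Rightarrow> 'x \<Rightarrow> 'm"           \<comment> \<open>alpha : f => g, y |-> alpha^*_y : g^* y -> f^* y\<close>

definition is_trihom_data ::
  "('b, 'f, 'a) cat_graph \<Rightarrow> ('b, 'f, 'a, 'x, 'm, 'c) trihom_data \<Rightarrow> bool" where
  "is_trihom_data B F \<longleftrightarrow>
     (\<forall>b\<in>CGOb B. is_bicat_data (FB F b)) \<and>
     (\<forall>b\<in>CGOb B. \<forall>c\<in>CGOb B. \<forall>f\<in>Obj (CGHom B b c). \<forall>y\<in>BOb (FB F c).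
        Fstar F b c f y \<in> BOb (FB F b)) \<and>
     (\<forall>b\<in>CGOb B. \<forall>c\<in>CGOb B. \<forall>\<alpha>\<in>Arr (CGHom B b c). \<forall>y\<in>BOb (FB F c).
        Fcomp F b c \<alpha> y \<in> Obj (BHom (FB F b) (Fstar F b c (Cod (CGHom B b c) \<alpha>) y)
                                           (Fstar F b c (Dom (CGHom B b c) \<alpha>) y)))"

definition gr_objs ::
  "('b, 'f, 'a) cat_graph \<Rightarrow> ('b, 'f, 'a, 'x, 'm, 'c) trihom_data \<Rightarrow> 'b \<Rightarrow> 'x \<Rightarrow> 'b \<Rightarrow> 'x
   \<Rightarrow> ('f \<times> 'm) set" where
  "gr_objs B F b x c y =
     {(f, u). f \<in> Obj (CGHom B b c) \<and> u \<in> Obj (BHom (FB F b) x (Fstar F b c f y))}"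

definition gr_2cells ::
  "('b, 'f, 'a) cat_graph \<Rightarrow> ('b, 'f, 'a, 'x, 'm, 'c) trihom_data \<Rightarrow> 'b \<Rightarrow> 'x \<Rightarrow> 'b \<Rightarrow> 'x
   \<Rightarrow> ('f \<times> 'm) \<Rightarrow> ('f \<times> 'm) \<Rightarrow> ('a \<times> 'c) set" where
  "gr_2cells B F b x c y p q =
     (case p of (f, u) \<Rightarrow> case q of (g, v) \<Rightarrow>
       {(\<alpha>, \<beta>). \<alpha> \<in> hom (CGHom B b c) f g \<and>
          \<beta> \<in> hom (BHom (FB F b) x (Fstar F b c f y)) u (HComp (FB F b) (Fcomp F b c \<alpha> y) v)})"

definition gr_similarity ::
  "('b, 'f, 'a) cat_graph \<Rightarrow> ('b, 'f, 'a, 'x, 'm, 'c) trihom_data \<Rightarrow> 'b \<Rightarrow> 'x \<Rightarrow> 'b \<Rightarrow> 'x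
   \<Rightarrow> ('f \<times> 'm) \<Rightarrow> ('f \<times> 'm) \<Rightarrow> rat" where
  "gr_similarity B F b x c y p q = of_nat (card (gr_2cells B F b x c y p q))"

end

theory Submission
  imports Defs
begin

text \<open>
  The objects of Gr(F)((b,x),(c,y)) form the dependent sum of the sets
  Obj Fb(x, f^*y) over f \<in> Obj B(b,c), and a 2-cell (f,u) \<Rightarrow> (g,v) is a
  2-cell \<alpha> : f \<Rightarrow> g together with a 2-cell u \<Rightarrow> \<alpha>^*_y \<circ> v.  Hence
  #Gr((f,u),(g,v)) = \<Sum>_{\<alpha> : f \<Rightarrow> g} #Fb(x,f^*y)(u, \<alpha>^*_y \<circ> v).
  Summing against k_u first, the coweighting on each fibre Fb(x,f^*y)
  turns every summand into 1, leaving #B(b,c)(f,g); summing that against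
  k_f gives 1 by the coweighting on B(b,c).
\<close>

text \<open>Summing a coweighting against the hom-counts into a family of
  objects t_a counts the family: each target contributes exactly 1.\<close>
lemma coweighting_sum_over_targets:
  assumes cow: "coweighting (Obj C) (Obj C) (similarity_matrix C) k"
    and targets: "\<And>a. a \<in> A \<Longrightarrow> t a \<in> Obj C"
  shows "(\<Sum>s\<in>Obj C. k s * (\<Sum>a\<in>A. of_nat (card (hom C s (t a))))) = of_nat (card A)"
proof -
  have "(\<Sum>s\<in>Obj C. k s * (\<Sum>a\<in>A. of_nat (card (hom C s (t a)))))
      = (\<Sum>a\<in>A. \<Sum>s\<in>Obj C. k s * similarity_matrix C s (t a))"
    by (simp add: sum_distrib_left similarity_matrix_def sum.swap[of _ "Obj C"])
  also have "\<dots> = (\<Sum>a\<in>A. 1)"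
    using cow targets by (simp add: coweighting_def)
  finally show ?thesis by simp
qed

lemma sum_Sigma_product_weights:
  fixes kI :: "'i \<Rightarrow> 'r::comm_semiring_0" and kJ :: "'i \<Rightarrow> 'j \<Rightarrow> 'r"
  assumes "finite I" "\<And>i. i \<in> I \<Longrightarrow> finite (J i)"
  shows "(\<Sum>p\<in>Sigma I J. (\<lambda>(i, j). kI i * kJ i j) p * z p)
       = (\<Sum>i\<in>I. kI i * (\<Sum>j\<in>J i. kJ i j * z (i, j)))"
proof -
  have "(\<Sum>p\<in>Sigma I J. (\<lambda>(i, j). kI i * kJ i j) p * z p)
      = (\<Sum>i\<in>I. \<Sum>j\<in>J i. kI i * (kJ i j * z (i, j)))"
    using assms by (simp add: sum.Sigma split_def mult.assoc)
  then show ?thesis by (simp add: sum_distrib_left)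
qed

lemma finite_category_hom_finite:
  "finite_category C \<Longrightarrow> finite (hom C s t)"
  by (simp add: finite_category_def hom_def)

lemma gr_objs_Sigma:
  "gr_objs B F b x c y = Sigma (Obj (CGHom B b c)) (\<lambda>f. Obj (BHom (FB F b) x (Fstar F b c f y)))"
  by (auto simp: gr_objs_def)

lemma gr_reindex_obj:
  assumes B: "is_cat_graph B" and F: "is_trihom_data B F"
    and bc: "b \<in> CGOb B" "c \<in> CGOb B"
    and xy: "x \<in> BOb (FB F b)" "y \<in> BOb (FB F c)"
    and \<alpha>: "\<alpha> \<in> hom (CGHom B b c) f g"
    and v: "v \<in> Obj (BHom (FB F b) x (Fstar F b c g y))"
  shows "HComp (FB F b) (Fcomp F b c \<alpha> y) v \<in> Obj (BHom (FB F b) x (Fstar F b c f y))"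
proof -
  have \<alpha>_arr: "\<alpha> \<in> Arr (CGHom B b c)" and \<alpha>_dom: "Dom (CGHom B b c) \<alpha> = f"
    and \<alpha>_cod: "Cod (CGHom B b c) \<alpha> = g"
    using \<alpha> by (auto simp: hom_def)
  have "is_category (CGHom B b c)"
    using B bc by (simp add: is_cat_graph_def)
  then have fg: "f \<in> Obj (CGHom B b c)" "g \<in> Obj (CGHom B b c)"
    using \<alpha>_arr \<alpha>_dom \<alpha>_cod by (auto simp: is_category_def)
  have pullbacks: "Fstar F b c f y \<in> BOb (FB F b)" "Fstar F b c g y \<in> BOb (FB F b)"
    using F bc xy fg by (auto simp: is_trihom_data_def)
  have comp: "Fcomp F b c \<alpha> y \<in> Obj (BHom (FB F b) (Fstar F b c g y) (Fstar F b c f y))"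
    using F bc xy \<alpha>_arr \<alpha>_dom \<alpha>_cod unfolding is_trihom_data_def by metis
  have "is_bicat_data (FB F b)"
    using F bc by (simp add: is_trihom_data_def)
  then show ?thesis
    using xy(1) pullbacks comp v unfolding is_bicat_data_def by blast
qed

lemma gr_similarity_sum:
  assumes "finite_category (CGHom B b c)"
    and "finite_category (BHom (FB F b) x (Fstar F b c f y))"
  shows "gr_similarity B F b x c y (f, u) (g, v)
       = (\<Sum>\<alpha>\<in>hom (CGHom B b c) f g.
            of_nat (card (hom (BHom (FB F b) x (Fstar F b c f y)) u
                              (HComp (FB F b) (Fcomp F b c \<alpha> y) v))))"
proof -
  have "gr_2cells B F b x c y (f, u) (g, v)
      = Sigma (hom (CGHom B b c) f g)
          (\<lambda>\<alpha>. hom (BHom (FB F b) x (Fstar F b c f y)) u (HComp (FB F b) (Fcomp F b c \<alpha> y) v))"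
    by (auto simp: gr_2cells_def)
  then show ?thesis
    using assms by (simp add: gr_similarity_def card_SigmaI finite_category_hom_finite)
qed

theorem lemma3p30:
  fixes B :: "('b, 'f, 'a) cat_graph"
    and F :: "('b, 'f, 'a, 'x, 'm, 'c) trihom_data"
    and b c :: 'b and x y :: 'x
    and kB :: "'f \<Rightarrow> rat" and kF :: "'f \<Rightarrow> 'm \<Rightarrow> rat"
  assumes "is_cat_graph B" and "is_trihom_data B F"
    and "b \<in> CGOb B" and "c \<in> CGOb B"
    and "x \<in> BOb (FB F b)" and "y \<in> BOb (FB F c)"
    and "finite_category (CGHom B b c)"
    and "coweighting (Obj (CGHom B b c)) (Obj (CGHom B b c))
           (similarity_matrix (CGHom B b c)) kB"
    and "\<And>f. f \<in> Obj (CGHom B b c) \<Longrightarrow>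
           finite_category (BHom (FB F b) x (Fstar F b c f y))"
    and "\<And>f. f \<in> Obj (CGHom B b c) \<Longrightarrow>
           coweighting (Obj (BHom (FB F b) x (Fstar F b c f y)))
                       (Obj (BHom (FB F b) x (Fstar F b c f y)))
                       (similarity_matrix (BHom (FB F b) x (Fstar F b c f y))) (kF f)"
  shows "coweighting (gr_objs B F b x c y) (gr_objs B F b x c y)
           (gr_similarity B F b x c y) (\<lambda>(f, u). kB f * kF f u)"
  unfolding coweighting_def gr_objs_Sigma
proof (intro ballI, elim SigmaE)
  fix q g v
  assume q: "q = (g, v)" and g: "g \<in> Obj (CGHom B b c)"
    and v: "v \<in> Obj (BHom (FB F b) x (Fstar F b c g y))"
  let ?H = "\<lambda>f. BHom (FB F b) x (Fstar F b c f y)"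
  have fin: "finite (Obj (CGHom B b c))" "\<And>f. f \<in> Obj (CGHom B b c) \<Longrightarrow> finite (Obj (?H f))"
    using assms(7,9) by (auto simp: finite_category_def)
  have fibre: "(\<Sum>u\<in>Obj (?H f). kF f u * gr_similarity B F b x c y (f, u) (g, v))
             = similarity_matrix (CGHom B b c) f g" if f: "f \<in> Obj (CGHom B b c)" for f
    using coweighting_sum_over_targets[OF assms(10)[OF f]
            gr_reindex_obj[OF assms(1-6) _ v]]
    by (simp add: gr_similarity_sum[OF assms(7) assms(9)[OF f]] similarity_matrix_def)
  have "(\<Sum>p\<in>Sigma (Obj (CGHom B b c)) (\<lambda>f. Obj (?H f)).
          (\<lambda>(f, u). kB f * kF f u) p * gr_similarity B F b x c y p q)
      = (\<Sum>f\<in>Obj (CGHom B b c). kB f * similarity_matrix (CGHom B b c) f g)"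
    using fin fibre by (simp add: q sum_Sigma_product_weights)
  also have "\<dots> = 1"
    using assms(8) g by (simp add: coweighting_def)
  finally show "(\<Sum>p\<in>Sigma (Obj (CGHom B b c)) (\<lambda>f. Obj (?H f)).
          (\<lambda>(f, u). kB f * kF f u) p * gr_similarity B F b x c y p q) = 1" .
qed

end
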